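(* Let $n$ be a positive integer, $x\in\Gamma_n$ and $z\in\{r,b\}^n$. Then \[ \tilde\xi_n(x,z)=n-\tfrac12+\tfrac12\,\#_{\mathrm{dl}}(x)+\tfrac12\,W_{\mathrm{tot}}(G_x)-\mathrm{wt}_{G_x}(z). \]
   Context: Let $[n]=\{1,\dots,n\}$. $\Gamma_n$ is the set of words $x=(x_1,\dots,x_{2n})\in[n]^{2n}$ in which every symbol of $[n]$ occurs exactly twice. Colours are formal symbols $r,b$; $\neg$ swaps them, $\neg^0$ is the identity, $\neg^1=\neg$. $[\,\cdot\,]$ is the Iverson bracket. For $f\in\{r,b\}^{2n}$, $\xi_n(f)=\sum_{i=1}^{2n-1}[f_i\neq f_{i+1}]$. For $z\in\{r,b\}^n$, $\mathcal E_n(x,z)_i=\neg^{[x_i\in\{x_1,\dots,x_{i-1}\}]}z_{x_i}$ and $\tilde\xi_n(x,z)=\xi_n(\mathcal E_n(x,z))$. For $i\in[2n-1]$, $\eta(x,i)=[x_{i+1}\in\{x_1,\dots,x_i\}]\oplus[x_i\in\{x_1,\dots,x_{i-1}\}]$. For $e\subseteq[n]$, $\theta_x(e)=-\sum_{i=1}^{2n-1}(-1)^{\eta(x,i)}\delta_{e,\{x_i,x_{i+1}\}}$. The BPSP graph $G_x=(V_x,E_x,W_x)$ has $V_x=[n]$, $E_x=\{\{x_i,x_{i+1}\}: i\in[2n-1],\ x_i\neq x_{i+1},\ \theta_x(\{x_i,x_{i+1}\})\neq0\}$, $W_x=\theta_x|_{E_x}$; $W_{\mathrm{tot}}(G_x)=\sum_{e\in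 E_x}W_x(e)$; $\mathrm{wt}_{G_x}(z)=\sum_{\{i,j\}\in E_x}W_x(\{i,j\})[z_i\neq z_j]$. $\#_{\mathrm{dl}}(x)=|\{i\in[2n-1]:x_i=x_{i+1}\}|$. *)

theory Defs
  imports Complex_Main
begin

text \<open>Words are functions on positions 1..2n (1-based, as in the paper);
colourings are functions on symbols 1..n.\<close>

datatype colour = Red | Blue

fun cneg :: "colour \<Rightarrow> colour" where
  "cneg Red = Blue" | "cneg Blue = Red"

definition negpow :: "bool \<Rightarrow> colour \<Rightarrow> colour" where
  "negpow b c = (if b then cneg c else c)"

definition iv :: "bool \<Rightarrow> int" where
  "iv b = (if b then 1 else 0)"

definition Gamma :: "nat \<Rightarrow> (nat \<Rightarrow> nat) set" where
  "Gamma n = {x. (\<forall>i\<in>{1..2*n}. x i \<in> {1..n}) \<and>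
                 (\<forall>k\<in>{1..n}. card {i\<in>{1..2*n}. x i = k} = 2)}"

definition xi :: "nat \<Rightarrow> (nat \<Rightarrow> colour) \<Rightarrow> int" where
  "xi n f = (\<Sum>i=1..2*n-1. iv (f i \<noteq> f (i+1)))"

definition seen :: "(nat \<Rightarrow> nat) \<Rightarrow> nat \<Rightarrow> bool" where
  "seen x i = (x i \<in> x ` {1..<i})"

definition Enc :: "(nat \<Rightarrow> nat) \<Rightarrow> (nat \<Rightarrow> colour) \<Rightarrow> nat \<Rightarrow> colour" where
  "Enc x z i = negpow (seen x i) (z (x i))"

definition xi_tilde :: "nat \<Rightarrow> (nat \<Rightarrow> nat) \<Rightarrow> (nat \<Rightarrow> colour) \<Rightarrow> int" where
  "xi_tilde n x z = xi n (Enc x z)"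

definition eta :: "(nat \<Rightarrow> nat) \<Rightarrow> nat \<Rightarrow> bool" where
  "eta x i = (seen x (i+1) \<noteq> seen x i)"

definition theta :: "nat \<Rightarrow> (nat \<Rightarrow> nat) \<Rightarrow> nat set \<Rightarrow> int" where
  "theta n x e = - (\<Sum>i=1..2*n-1. (-1) ^ (if eta x i then 1 else 0) * iv (e = {x i, x (i+1)}))"

definition edges :: "nat \<Rightarrow> (nat \<Rightarrow> nat) \<Rightarrow> nat set set" where
  "edges n x = {{x i, x (i+1)} | i. i \<in> {1..2*n-1} \<and> x i \<noteq> x (i+1)
                  \<and> theta n x {x i, x (i+1)} \<noteq> 0}"

definition Wtot :: "nat \<Rightarrow> (nat \<Rightarrow> nat) \<Rightarrow> int" where
  "Wtot n x = (\<Sum>e\<in>edges n x. theta n x e)"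

definition wt :: "nat \<Rightarrow> (nat \<Rightarrow> nat) \<Rightarrow> (nat \<Rightarrow> colour) \<Rightarrow> int" where
  "wt n x z = (\<Sum>e\<in>edges n x. theta n x e * iv (\<exists>i\<in>e. \<exists>j\<in>e. z i \<noteq> z j))"

definition ndl :: "nat \<Rightarrow> (nat \<Rightarrow> nat) \<Rightarrow> nat" where
  "ndl n x = card {i\<in>{1..2*n-1}. x i = x (i+1)}"

end

theory Submission
  imports Defs
begin

text \<open>The encoded colour at position i is z(x_i), flipped iff x_i has occurred before.
  Hence the colour changes between positions i and i+1 exactly when one, but not both, of
  "the seen-status changes" (eta) and "z differs on x_i, x_(i+1)" holds, i.e.
  [E_i \<noteq> E_(i+1)] = [eta_i] + (-1)^[eta_i] [z(x_i) \<noteq> z(x_(i+1))].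
  Summed over i, the second part is -wt(z) by the very definition of theta. The first part
  depends only on the word: a doubled letter always changes the seen-status, and at the
  other positions [eta_i] = (1 - (-1)^[eta_i]) / 2, whose sum brings in W_tot.\<close>

definition eta_sign :: "(nat \<Rightarrow> nat) \<Rightarrow> nat \<Rightarrow> int" where
  "eta_sign x i = (-1) ^ (if eta x i then 1 else 0)"

lemma iv_negpow_neq:
  "iv (negpow a c \<noteq> negpow b d) = iv (a \<noteq> b) + (-1) ^ (if a \<noteq> b then 1 else 0) * iv (c \<noteq> d)"
  by (cases c; cases d; cases a; cases b; simp add: negpow_def iv_def)

lemma theta_eq_sum_eta_sign:
  "theta n x e = - (\<Sum>i=1..2*n-1. eta_sign x i * iv (e = {x i, x (i+1)}))"
  by (simp add: theta_def eta_sign_def)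

lemma eta_if_doubled_letter:
  assumes x: "x \<in> Gamma n" and i: "i \<in> {1..2*n-1}" and dl: "x i = x (i+1)"
  shows "eta x i"
proof -
  have "i \<in> {1..<i+1}" using i by simp
  then have "seen x (i+1)" unfolding seen_def dl[symmetric] by (rule imageI)
  moreover have "\<not> seen x i"
  proof
    assume "seen x i"
    then obtain j where j: "j \<in> {1..<i}" "x j = x i" unfolding seen_def by auto
    have "card {k\<in>{1..2*n}. x k = x i} = 2"
      using x i unfolding Gamma_def by auto
    moreover have "{j, i, i+1} \<subseteq> {k\<in>{1..2*n}. x k = x i}"
      using j i dl by auto
    ultimately have "card {j, i, i+1} \<le> 2"
      using card_mono[of "{k\<in>{1..2*n}. x k = x i}" "{j, i, i+1}"] by simp
    moreover have "card {j, i, i+1} = 3" using j by auto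
    ultimately show False by simp
  qed
  ultimately show ?thesis unfolding eta_def by auto
qed

text \<open>Positions with x_i = x_(i+1) carry no edge, whence the factor iv (x i \<noteq> x (i+1));
  edges of weight zero are missing from edges n x too, but contribute nothing anyway.\<close>

lemma sum_edges_theta:
  fixes f :: "nat set \<Rightarrow> int"
  shows "(\<Sum>e\<in>edges n x. theta n x e * f e)
       = - (\<Sum>i=1..2*n-1. eta_sign x i * iv (x i \<noteq> x (i+1)) * f {x i, x (i+1)})"
proof -
  define I where "I = {1..2*n-1}"
  define p where "p i = {x i, x (i+1)}" for i
  define E where "E = p ` {i\<in>I. x i \<noteq> x (i+1)}"
  have finE: "finite E" unfolding E_def I_def by simp
  have p_in_E: "p i \<in> E \<longleftrightarrow> x i \<noteq> x (i+1)" if "i \<in> I" for i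
    using that unfolding E_def p_def by (auto simp: doubleton_eq_iff)
  have "(\<Sum>e\<in>edges n x. theta n x e * f e) = (\<Sum>e\<in>E. theta n x e * f e)"
  proof (rule sum.mono_neutral_left[OF finE])
    show "edges n x \<subseteq> E" unfolding edges_def E_def p_def I_def by blast
    show "\<forall>e\<in>E - edges n x. theta n x e * f e = 0"
    proof
      fix e assume e: "e \<in> E - edges n x"
      then obtain i where "i \<in> I" "x i \<noteq> x (i+1)" "e = p i" unfolding E_def by auto
      with e have "theta n x e = 0" unfolding edges_def p_def I_def by blast
      then show "theta n x e * f e = 0" by simp
    qed
  qed
  also have "\<dots> = - (\<Sum>e\<in>E. \<Sum>i\<in>I. eta_sign x i * (if e = p i then f e else 0))"
    unfolding theta_eq_sum_eta_sign I_def p_def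
    by (auto simp: sum_negf sum_distrib_right iv_def intro!: sum.cong)
  also have "\<dots> = - (\<Sum>i\<in>I. eta_sign x i * (\<Sum>e\<in>E. if e = p i then f e else 0))"
    by (simp add: sum_distrib_left) (rule sum.swap)
  also have "\<dots> = - (\<Sum>i\<in>I. eta_sign x i * iv (x i \<noteq> x (i+1)) * f (p i))"
    using finE p_in_E by (auto simp: sum.delta' iv_def intro!: sum.cong)
  finally show ?thesis unfolding I_def p_def .
qed

lemma wt_eq_sum_positions:
  "wt n x z = - (\<Sum>i=1..2*n-1. eta_sign x i * iv (z (x i) \<noteq> z (x (i+1))))"
  unfolding wt_def sum_edges_theta
  by (auto simp: iv_def intro!: sum.cong)

lemma Wtot_eq_sum_positions:
  "Wtot n x = - (\<Sum>i=1..2*n-1. eta_sign x i * iv (x i \<noteq> x (i+1)))"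
  using sum_edges_theta[of n x "\<lambda>_. 1"] by (simp add: Wtot_def)

lemma ndl_eq_sum_positions:
  "int (ndl n x) = (\<Sum>i=1..2*n-1. iv (x i = x (i+1)))"
  by (simp add: ndl_def iv_def sum.If_cases Int_def conj_commute)

lemma xi_tilde_plus_wt:
  "xi_tilde n x z + wt n x z = (\<Sum>i=1..2*n-1. iv (eta x i))"
proof -
  have "xi_tilde n x z
      = (\<Sum>i=1..2*n-1. iv (eta x i) + eta_sign x i * iv (z (x i) \<noteq> z (x (i+1))))"
    unfolding xi_tilde_def xi_def Enc_def eta_sign_def eta_def
    by (intro sum.cong) (auto simp: iv_negpow_neq)
  then show ?thesis by (simp add: wt_eq_sum_positions sum.distrib)
qed

lemma double_sum_eta:
  assumes "x \<in> Gamma n"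
  shows "2 * (\<Sum>i=1..2*n-1. iv (eta x i)) = int (2*n-1) + int (ndl n x) + Wtot n x"
proof -
  have "2 * iv (eta x i)
      = 1 + iv (x i = x (i+1)) - eta_sign x i * iv (x i \<noteq> x (i+1))"
    if "i \<in> {1..2*n-1}" for i
    using eta_if_doubled_letter[OF assms that] by (auto simp: eta_sign_def iv_def)
  then have "2 * (\<Sum>i=1..2*n-1. iv (eta x i))
      = (\<Sum>i=1..2*n-1. 1 + iv (x i = x (i+1)) - eta_sign x i * iv (x i \<noteq> x (i+1)))"
    by (simp add: sum_distrib_left)
  then show ?thesis
    by (simp add: sum.distrib sum_subtractf ndl_eq_sum_positions Wtot_eq_sum_positions)
qed

theorem corollary3:
  fixes n :: nat and x :: "nat \<Rightarrow> nat" and z :: "nat \<Rightarrow> colour"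
  assumes "n \<ge> 1" and "x \<in> Gamma n"
  shows "real_of_int (xi_tilde n x z) = real n - 1/2 + real (ndl n x) / 2 + real_of_int (Wtot n x) / 2 - real_of_int (wt n x z)"
proof -
  have "2 * xi_tilde n x z = int (2*n-1) + int (ndl n x) + Wtot n x - 2 * wt n x z"
    using double_sum_eta[OF assms(2)] xi_tilde_plus_wt[of n x z] by simp
  moreover have "real (2*n-1) = 2 * real n - 1" using assms(1) by simp
  ultimately show ?thesis by (simp add: field_simps)
qed

end
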